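(* Let $R$ be a Krull domain whose divisor class group $Cl(R)$ is not torsion. Then there exist a height-one prime ideal $P$ of $R$ whose class in $Cl(R)$ has infinite order, and an irreducible element $x\in P$, such that $x^2$ factors uniquely.
   Context: A nonzero nonunit $w$ of a domain $R$ factors uniquely if whenever $w=\alpha_1\cdots\alpha_n=\beta_1\cdots\beta_m$ with all $\alpha_i,\beta_j$ irreducible, then $m=n$ and after reordering, $\alpha_i=u_i\beta_i$ for units $u_i$. *)

theory Defs
  imports "HOL-Computational_Algebra.Factorial_Ring" "HOL-Computational_Algebra.Fraction_Field"
begin

text \<open>The domain R is a type of class idom; its fraction field is 'a fract,
  with R embedded as Fract a 1.\<close>

definition r_ideal :: "'a::idom set \<Rightarrow> bool" where
  "r_ideal I \<longleftrightarrow> 0 \<in> I \<and> (\<forall>a\<in>I. \<forall>b\<in>I. a + b \<in> I) \<and> (\<forall>a\<in>I. \<forall>r. r * a \<in> I)"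

definition r_prime_ideal :: "'a::idom set \<Rightarrow> bool" where
  "r_prime_ideal P \<longleftrightarrow> r_ideal P \<and> P \<noteq> UNIV \<and> (\<forall>a b. a * b \<in> P \<longrightarrow> a \<in> P \<or> b \<in> P)"

definition height_one_prime :: "'a::idom set \<Rightarrow> bool" where
  "height_one_prime P \<longleftrightarrow> r_prime_ideal P \<and> P \<noteq> {0} \<and>
     (\<forall>Q. r_prime_ideal Q \<and> Q \<subseteq> P \<longrightarrow> Q = {0} \<or> Q = P)"

text \<open>Normalized discrete (rank one, value group Z) valuation on the fraction field;
  the value at 0 is irrelevant.\<close>
definition discrete_valuation :: "('a::idom fract \<Rightarrow> int) \<Rightarrow> bool" where
  "discrete_valuation v \<longleftrightarrow>
     (\<forall>x y. x \<noteq> 0 \<longrightarrow> y \<noteq> 0 \<longrightarrow> v (x * y) = v x + v y) \<and>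
     (\<forall>x y. x \<noteq> 0 \<longrightarrow> y \<noteq> 0 \<longrightarrow> x + y \<noteq> 0 \<longrightarrow> min (v x) (v y) \<le> v (x + y)) \<and>
     (\<forall>n. \<exists>x. x \<noteq> 0 \<and> v x = n)"

definition valuation_ring :: "('a::idom fract \<Rightarrow> int) \<Rightarrow> 'a fract set" where
  "valuation_ring v = {x. x = 0 \<or> 0 \<le> v x}"

definition krull_domain :: "'a::idom itself \<Rightarrow> bool" where
  "krull_domain TYPE('a) \<longleftrightarrow> (\<exists>V :: ('a fract \<Rightarrow> int) set.
     (\<forall>v\<in>V. discrete_valuation v) \<and>
     (\<forall>x :: 'a fract. (\<exists>a. x = Fract a 1) \<longleftrightarrow> (\<forall>v\<in>V. x \<in> valuation_ring v)) \<and>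
     (\<forall>a :: 'a. a \<noteq> 0 \<longrightarrow> finite {v\<in>V. v (Fract a 1) \<noteq> 0}))"

definition localization :: "'a::idom set \<Rightarrow> 'a fract set" where
  "localization P = {Fract a b | a b. b \<notin> P}"

text \<open>The normalized valuation v_P of the DVR R_P (P height one in a Krull domain).\<close>
definition val_at :: "'a::idom set \<Rightarrow> 'a fract \<Rightarrow> int" where
  "val_at P = (SOME v. discrete_valuation v \<and> valuation_ring v = localization P)"

definition is_divisor :: "('a::idom set \<Rightarrow> int) \<Rightarrow> bool" where
  "is_divisor D \<longleftrightarrow> finite {P. D P \<noteq> 0} \<and> (\<forall>P. D P \<noteq> 0 \<longrightarrow> height_one_prime P)"

definition principal_divisor :: "('a::idom set \<Rightarrow> int) \<Rightarrow> bool" where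
  "principal_divisor D \<longleftrightarrow> (\<exists>f :: 'a fract. f \<noteq> 0 \<and>
     (\<forall>P. height_one_prime P \<longrightarrow> D P = val_at P f))"

definition class_group_torsion :: "'a::idom itself \<Rightarrow> bool" where
  "class_group_torsion TYPE('a) \<longleftrightarrow> (\<forall>D :: 'a set \<Rightarrow> int. is_divisor D \<longrightarrow>
     (\<exists>n::int. n \<ge> 1 \<and> principal_divisor (\<lambda>P. n * D P)))"

definition prime_class_infinite_order :: "'a::idom set \<Rightarrow> bool" where
  "prime_class_infinite_order P \<longleftrightarrow>
     (\<forall>n::int. n \<ge> 1 \<longrightarrow> \<not> principal_divisor (\<lambda>Q. if Q = P then n else 0))"

definition factors_uniquely :: "'a::idom \<Rightarrow> bool" where
  "factors_uniquely w \<longleftrightarrow> w \<noteq> 0 \<and> \<not> w dvd 1 \<and>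
     (\<forall>xs ys. (\<forall>a\<in>set xs. irreducible a) \<longrightarrow> (\<forall>b\<in>set ys. irreducible b) \<longrightarrow>
        prod_list xs = w \<longrightarrow> prod_list ys = w \<longrightarrow>
        (\<exists>zs. mset zs = mset ys \<and>
           list_all2 (\<lambda>a b. \<exists>u. u dvd 1 \<and> a = u * b) xs zs))"

end

theory Submission
  imports Defs
begin

text \<open>
  The
  valuations whose centre is a height-one prime \<open>P\<close> have valuation ring \<open>R\<^sub>P\<close>, and the
  others are redundant, so \<open>R\<close> is the set of fractions with nonnegative value at every
  \<open>v\<^sub>P\<close>: divisibility in \<open>R\<close> is read off from divisors. A divisor of infinite order is a sum
  of prime divisors, one of which therefore has infinite order.

  For any height-one prime \<open>P\<close>, choose \<open>x \<in> P - {0}\<close> whose support \<open>S\<close> (the height-one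
  primes containing \<open>x\<close>) is minimal, and then whose degree \<open>\<Sum>Q\<in>S. v\<^sub>Q x\<close> is minimal.
  Every divisor supported on \<open>S\<close> is then proportional to \<open>div x\<close>: otherwise a suitable
  \<open>g\<^sup>a x\<^sup>b\<close> would be an element of \<open>P\<close> with smaller support. Hence every non-unit dividing
  \<open>x\<^sup>2\<close> has degree at least \<open>deg x\<close>, with equality only for associates of \<open>x\<close>, so \<open>x\<close> is
  irreducible and \<open>x \<cdot> x\<close> is the only factorization of \<open>x\<^sup>2\<close>.
\<close>

lemma Fract1_eq_iff [simp]: "Fract (a::'a::idom) 1 = Fract b 1 \<longleftrightarrow> a = b"
  by (simp add: eq_fract)

lemma Fract1_eq_0_iff [simp]: "Fract (a::'a::idom) 1 = 0 \<longleftrightarrow> a = 0"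
  by (metis Fract1_eq_iff fract_collapse(1))

lemma Fract1_power: "Fract (a::'a::idom) 1 ^ n = Fract (a ^ n) 1"
  by (induction n) (simp_all add: One_fract_def)

lemma Fract_eq_0_iff: "b \<noteq> 0 \<Longrightarrow> Fract (a::'a::idom) b = 0 \<longleftrightarrow> a = 0"
  by (simp add: Zero_fract_def eq_fract)

lemma associated_if_dvd_dvd:
  fixes a b :: "'a::idom"
  assumes "a dvd b" "b dvd a" "b \<noteq> 0"
  shows "\<exists>u. u dvd 1 \<and> a = u * b"
proof -
  obtain u where u: "a = b * u"
    using assms(2) by (rule dvdE)
  obtain w where w: "b = a * w"
    using assms(1) by (rule dvdE)
  have "b * (u * w) = b * 1"
    using u w by (metis mult.assoc mult_1_right)
  then have "u * w = 1"
    using assms(3) by simp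
  then show ?thesis
    using u by (metis dvdI mult.commute)
qed

lemma unit_multiples_associated:
  fixes x :: "'a::idom"
  assumes "u dvd 1" "w dvd 1"
  shows "\<exists>v. v dvd 1 \<and> u * x = v * (w * x)"
proof -
  obtain w' where w': "1 = w * w'"
    using assms(2) by (rule dvdE)
  then have "w' dvd 1"
    by (metis dvdI mult.commute)
  then have "u * w' dvd 1"
    using mult_dvd_mono[OF assms(1)] by fastforce
  moreover have "(u * w') * (w * x) = u * (w * w') * x"
    by (simp add: ac_simps)
  then have "u * x = (u * w') * (w * x)"
    using w' by simp
  ultimately show ?thesis
    by blast
qed

lemma finite_ex_max_ratio:
  fixes p q :: "'b \<Rightarrow> int"
  assumes "finite S" "S \<noteq> {}" "\<forall>x\<in>S. 0 < q x"
  shows "\<exists>m\<in>S. \<forall>x\<in>S. p x * q m \<le> p m * q x"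
  using assms
proof (induction S rule: finite_ne_induct)
  case (singleton x)
  then show ?case by simp
next
  case (insert x S)
  then obtain m where m: "m \<in> S" "\<forall>y\<in>S. p y * q m \<le> p m * q y"
    by auto
  show ?case
  proof (cases "p x * q m \<le> p m * q x")
    case True
    then show ?thesis using m by auto
  next
    case False
    have "p y * q x \<le> p x * q y" if "y \<in> S" for y
    proof -
      have "p y * q m * q x \<le> p m * q y * q x" "p m * q x * q y \<le> p x * q m * q y"
        using m(2) that False insert.prems
        by (auto intro!: mult_right_mono)
      then have "(p y * q x) * q m \<le> (p x * q y) * q m"
        by (simp add: algebra_simps)
      then show ?thesis
        using insert.prems m(1) by simp
    qed
    then show ?thesis by auto
  qed
qed

lemma obtain_lex_min:
  fixes f g :: "'b \<Rightarrow> nat"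
  assumes "a \<in> A"
  obtains m where "m \<in> A" "\<And>y. y \<in> A \<Longrightarrow> f m \<le> f y"
    "\<And>y. y \<in> A \<Longrightarrow> f y = f m \<Longrightarrow> g m \<le> g y"
proof -
  obtain m1 where m1: "m1 \<in> A" "\<forall>y. y \<in> A \<longrightarrow> f m1 \<le> f y"
    using ex_has_least_nat[of "\<lambda>y. y \<in> A", OF assms] by blast
  obtain m where "m \<in> A \<and> f m = f m1" "\<forall>y. y \<in> A \<and> f y = f m1 \<longrightarrow> g m \<le> g y"
    using ex_has_least_nat[of "\<lambda>y. y \<in> A \<and> f y = f m1" m1 g] m1(1) by blast
  then show ?thesis
    using that m1(2) by metis
qed

section \<open>Discrete valuations\<close>

context
  fixes v :: "'a::idom fract \<Rightarrow> int"
  assumes v: "discrete_valuation v"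
begin

lemma valuation_mult: "x \<noteq> 0 \<Longrightarrow> y \<noteq> 0 \<Longrightarrow> v (x * y) = v x + v y"
  using v unfolding discrete_valuation_def by blast

lemma valuation_add: "x \<noteq> 0 \<Longrightarrow> y \<noteq> 0 \<Longrightarrow> x + y \<noteq> 0 \<Longrightarrow> min (v x) (v y) \<le> v (x + y)"
  using v unfolding discrete_valuation_def by blast

lemma valuation_surj: "\<exists>x. x \<noteq> 0 \<and> v x = n"
  using v unfolding discrete_valuation_def by blast

lemma valuation_one [simp]: "v 1 = 0"
  using valuation_mult[of 1 1] by simp

lemma valuation_inverse: "x \<noteq> 0 \<Longrightarrow> v (inverse x) = - v x"
  using valuation_mult[of x "inverse x"] by simp

lemma valuation_power: "x \<noteq> 0 \<Longrightarrow> v (x ^ n) = int n * v x"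
  by (induction n) (simp_all add: valuation_mult algebra_simps)

lemma valuation_power_int: "x \<noteq> 0 \<Longrightarrow> v (x powi k) = k * v x"
  by (cases "k \<ge> 0")
    (simp_all add: power_int_def valuation_power valuation_inverse power_inverse[symmetric])

lemma valuation_power_int_mult:
  "x \<noteq> 0 \<Longrightarrow> y \<noteq> 0 \<Longrightarrow> v (x powi m * y powi n) = m * v x + n * v y"
  by (simp add: valuation_mult valuation_power_int)

lemma valuation_power_mult:
  "x \<noteq> 0 \<Longrightarrow> y \<noteq> 0 \<Longrightarrow> v (x ^ m * y ^ n) = int m * v x + int n * v y"
  by (simp add: valuation_mult valuation_power)

lemma valuation_Fract:
  assumes "a \<noteq> 0" "b \<noteq> 0"
  shows "v (Fract a b) = v (Fract a 1) - v (Fract b 1)"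
proof -
  have "Fract a b = Fract a 1 * inverse (Fract b 1)"
    using assms(2) by simp
  then show ?thesis
    using assms valuation_mult[of "Fract a 1" "inverse (Fract b 1)"] valuation_inverse[of "Fract b 1"]
    by (simp del: inverse_fract)
qed

end

context
  fixes P :: "'a::idom set"
  assumes P: "r_prime_ideal P"
begin

lemma prime_ideal_zero: "0 \<in> P"
  using P unfolding r_prime_ideal_def r_ideal_def by blast

lemma prime_ideal_mult_left: "a \<in> P \<Longrightarrow> r * a \<in> P"
  using P unfolding r_prime_ideal_def r_ideal_def by blast

lemma prime_ideal_one: "1 \<notin> P"
  using P prime_ideal_mult_left[of 1] unfolding r_prime_ideal_def by auto

lemma prime_ideal_mult_iff: "a * b \<in> P \<longleftrightarrow> a \<in> P \<or> b \<in> P"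
  using P prime_ideal_mult_left[of a b] prime_ideal_mult_left[of b a]
  unfolding r_prime_ideal_def by (auto simp: mult.commute)

lemma prime_ideal_power: "a ^ n \<in> P \<Longrightarrow> a \<in> P"
  by (induction n) (auto simp: prime_ideal_one prime_ideal_mult_iff)

lemma prime_ideal_dvd: "a \<in> P \<Longrightarrow> a dvd b \<Longrightarrow> b \<in> P"
  by (auto elim!: dvdE simp: prime_ideal_mult_iff)

lemma unit_notin_prime_ideal: "a dvd 1 \<Longrightarrow> a \<notin> P"
  using prime_ideal_dvd prime_ideal_one by blast

lemma Fract1_in_localization: "Fract a 1 \<in> localization P"
  using prime_ideal_one by (auto simp: localization_def)

end

lemma height_one_prime_imp_prime: "height_one_prime P \<Longrightarrow> r_prime_ideal P"
  by (simp add: height_one_prime_def)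

lemma height_one_prime_nonzero:
  assumes "height_one_prime P"
  obtains c where "c \<in> P" "c \<noteq> 0"
  using assms prime_ideal_zero[OF height_one_prime_imp_prime[OF assms]]
  unfolding height_one_prime_def by blast

section \<open>Krull domains via their defining family of valuations\<close>

definition center :: "('a::idom fract \<Rightarrow> int) \<Rightarrow> 'a set" where
  "center v = {a. a = 0 \<or> 0 < v (Fract a 1)}"

lemma center_eq_non_units:
  assumes "discrete_valuation v"
  shows "center v = {a. a = 0 \<or> inverse (Fract a 1) \<notin> valuation_ring v}"
  using valuation_inverse[OF assms, of "Fract a 1" for a]
  unfolding center_def valuation_ring_def by (auto simp del: inverse_fract)

locale krull_family =
  fixes V :: "('a::idom fract \<Rightarrow> int) set"
  assumes discrete: "v \<in> V \<Longrightarrow> discrete_valuation v"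
    and integral_iff: "(\<exists>a. x = Fract a 1) \<longleftrightarrow> (\<forall>v\<in>V. x \<in> valuation_ring v)"
    and finite_character: "a \<noteq> 0 \<Longrightarrow> finite {v\<in>V. v (Fract a 1) \<noteq> 0}"
begin

lemma valuation_nonneg:
  assumes "v \<in> V" "a \<noteq> 0"
  shows "0 \<le> v (Fract a 1)"
proof -
  have "Fract a 1 \<in> valuation_ring v"
    using integral_iff[of "Fract a 1"] assms(1) by blast
  then show ?thesis
    using assms(2) by (simp add: valuation_ring_def)
qed

lemma valuation_eq_0_outside_center:
  "v \<in> V \<Longrightarrow> a \<noteq> 0 \<Longrightarrow> a \<notin> center v \<Longrightarrow> v (Fract a 1) = 0"
  using valuation_nonneg[of v a] unfolding center_def by simp

lemma center_prime:
  assumes "v \<in> V"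
  shows "r_prime_ideal (center v)"
  unfolding r_prime_ideal_def r_ideal_def
proof (intro conjI ballI allI impI)
  note v = discrete[OF assms]
  show "0 \<in> center v"
    by (simp add: center_def)
  show "a + b \<in> center v" if "a \<in> center v" "b \<in> center v" for a b
  proof (cases "a = 0 \<or> b = 0 \<or> a + b = 0")
    case False
    then have "min (v (Fract a 1)) (v (Fract b 1)) \<le> v (Fract a 1 + Fract b 1)"
      by (intro valuation_add[OF v]) auto
    then show ?thesis
      using that False by (auto simp: center_def)
  qed (use that in \<open>auto simp: center_def\<close>)
  show "r * a \<in> center v" if "a \<in> center v" for r a
  proof (cases "r = 0 \<or> a = 0")
    case False
    then have "v (Fract (r * a) 1) = v (Fract r 1) + v (Fract a 1)"
      using valuation_mult[OF v, of "Fract r 1" "Fract a 1"] by simp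
    then show ?thesis
      using that False valuation_nonneg[OF assms, of r] by (auto simp: center_def)
  qed (auto simp: center_def)
  show "a \<in> center v \<or> b \<in> center v" if "a * b \<in> center v" for a b
  proof (cases "a = 0 \<or> b = 0")
    case False
    then have "v (Fract (a * b) 1) = v (Fract a 1) + v (Fract b 1)"
      using valuation_mult[OF v, of "Fract a 1" "Fract b 1"] by simp
    then show ?thesis
      using that False valuation_nonneg[OF assms, of a] valuation_nonneg[OF assms, of b]
      by (auto simp: center_def)
  qed (auto simp: center_def)
  have "(1::'a) \<notin> center v"
    using valuation_one[OF v] by (simp add: center_def One_fract_def)
  then show "center v \<noteq> UNIV"
    by blast
qed

lemma center_nonzero:
  assumes "v \<in> V"
  obtains c where "c \<noteq> 0" "c \<in> center v"
proof -
  obtain x where x: "x \<noteq> 0" "v x = 1"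
    using valuation_surj[OF discrete[OF assms]] by blast
  obtain c d where cd: "x = Fract c d" "d \<noteq> 0"
    by (cases x)
  have "c \<noteq> 0"
    using x(1) cd Fract_eq_0_iff[OF cd(2)] by simp
  then have "0 < v (Fract c 1)"
    using x cd valuation_Fract[OF discrete[OF assms] _ cd(2)] valuation_nonneg[OF assms cd(2)]
    by simp
  then show ?thesis
    using that \<open>c \<noteq> 0\<close> by (auto simp: center_def)
qed

lemma center_eq_if_height_one:
  assumes "height_one_prime P" "v \<in> V" "center v \<subseteq> P"
  shows "center v = P"
proof -
  obtain c where "c \<noteq> 0" "c \<in> center v"
    using center_nonzero[OF assms(2)] .
  then have "center v \<noteq> {0}"
    by blast
  then show ?thesis
    using assms(1,3) center_prime[OF assms(2)] unfolding height_one_prime_def by blast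
qed

definition poles :: "'a fract \<Rightarrow> ('a fract \<Rightarrow> int) set" where
  "poles f = {v\<in>V. f \<notin> valuation_ring v}"

lemma finite_poles: "finite (poles f)"
proof -
  obtain c d where cd: "f = Fract c d" "d \<noteq> 0"
    by (cases f)
  show ?thesis
  proof (cases "c = 0")
    case True
    then have "poles f = {}"
      using cd by (auto simp: poles_def valuation_ring_def fract_collapse)
    then show ?thesis by simp
  next
    case False
    have "poles f \<subseteq> {v\<in>V. v (Fract d 1) \<noteq> 0}"
      using cd valuation_Fract[OF discrete False cd(2)] valuation_nonneg[OF _ False]
      by (fastforce simp: poles_def valuation_ring_def)
    then show ?thesis
      using finite_subset finite_character[OF cd(2)] by blast
  qed
qed

text \<open>Poles are removed one at a time by multiplying with a power of an element of the
  centre of the pole that lies outside \<open>P\<close>.\<close>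
lemma in_localization_if_nonneg_below:
  assumes P: "r_prime_ideal P"
    and nonneg: "\<forall>v\<in>V. center v \<subseteq> P \<longrightarrow> f \<in> valuation_ring v"
  shows "f \<in> localization P"
  using nonneg
proof (induction "card (poles f)" arbitrary: f rule: less_induct)
  case less
  show ?case
  proof (cases "poles f = {}")
    case True
    then obtain a where "f = Fract a 1"
      using integral_iff[of f] unfolding poles_def by blast
    then show ?thesis
      using Fract1_in_localization[OF P] by simp
  next
    case False
    then obtain w where w: "w \<in> V" "f \<notin> valuation_ring w"
      by (auto simp: poles_def)
    then obtain b where b: "b \<in> center w" "b \<notin> P"
      using less.prems by blast
    have b0: "b \<noteq> 0"
      using b prime_ideal_zero[OF P] by auto
    have f0: "f \<noteq> 0" and wf: "w f < 0"
      using w by (auto simp: valuation_ring_def)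
    define N where "N = nat (- w f)"
    define g where "g = Fract b 1 ^ N * f"
    have g0: "g \<noteq> 0"
      using f0 b0 by (simp add: g_def)
    have vg: "v g = int N * v (Fract b 1) + v f" if "v \<in> V" for v
      using valuation_mult[OF discrete[OF that]] valuation_power[OF discrete[OF that]] b0 f0
      by (simp add: g_def)
    have vb: "0 \<le> v (Fract b 1)" if "v \<in> V" for v
      using valuation_nonneg[OF that b0] .
    have "0 < w (Fract b 1)"
      using b b0 by (simp add: center_def)
    then have "0 \<le> w g"
      using vg[OF w(1)] wf by (simp add: N_def)
    then have "poles g \<subset> poles f"
      using w vg vb g0 f0 by (fastforce simp: poles_def valuation_ring_def)
    then have "card (poles g) < card (poles f)"
      using finite_poles psubset_card_mono by blast
    moreover have "\<forall>v\<in>V. center v \<subseteq> P \<longrightarrow> g \<in> valuation_ring v"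
      using less.prems vg vb f0 by (fastforce simp: valuation_ring_def)
    ultimately have "g \<in> localization P"
      using less.hyps by blast
    then obtain e s where es: "g = Fract e s" "s \<notin> P"
      by (auto simp: localization_def)
    have "f = g / Fract b 1 ^ N"
      using b0 by (simp add: g_def)
    also have "\<dots> = Fract e (s * b ^ N)"
      using es(1) b0 by (simp add: Fract1_power)
    finally have "f = Fract e (s * b ^ N)" .
    moreover have "s * b ^ N \<notin> P"
      using es(2) b(2) prime_ideal_mult_iff[OF P] prime_ideal_power[OF P] by blast
    ultimately show ?thesis
      by (auto simp: localization_def)
  qed
qed

lemma exists_center_below:
  assumes P: "r_prime_ideal P" "P \<noteq> {0}"
  obtains v where "v \<in> V" "center v \<subseteq> P"
proof (rule ccontr)
  assume "\<not> thesis"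
  then have none: "\<forall>v\<in>V. \<not> center v \<subseteq> P"
    using that by blast
  obtain a where a: "a \<in> P" "a \<noteq> 0"
    using P prime_ideal_zero[OF P(1)] by blast
  have "inverse (Fract a 1) \<in> localization P"
    using in_localization_if_nonneg_below[OF P(1)] none by blast
  then obtain e s where es: "Fract 1 a = Fract e s" "s \<notin> P"
    using a by (auto simp: localization_def)
  moreover have "s \<noteq> 0"
    using es(2) prime_ideal_zero[OF P(1)] by auto
  ultimately have "s = e * a"
    using eq_fract(1)[OF a(2), of s 1 e] by simp
  then show False
    using es(2) prime_ideal_mult_left[OF P(1) a(1)] by simp
qed

lemma localization_subset_valuation_ring:
  assumes P: "r_prime_ideal P" and v: "v \<in> V" "center v = P"
  shows "localization P \<subseteq> valuation_ring v"
proof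
  fix x assume "x \<in> localization P"
  then obtain a b where x: "x = Fract a b" "b \<notin> P"
    by (auto simp: localization_def)
  have b0: "b \<noteq> 0"
    using x prime_ideal_zero[OF P] by auto
  then show "x \<in> valuation_ring v"
    using x valuation_Fract[OF discrete[OF v(1)] _ b0, of a] valuation_nonneg[OF v(1)]
      valuation_eq_0_outside_center[OF v(1) b0]
    by (cases "a = 0") (auto simp: valuation_ring_def fract_collapse v(2))
qed

lemma numerator_in_localization:
  assumes P: "r_prime_ideal P" and z: "z \<in> localization P" "z \<noteq> 0"
  obtains e where "e \<noteq> 0" "\<And>u. u \<in> V \<Longrightarrow> center u = P \<Longrightarrow> u (Fract e 1) = u z"
proof -
  obtain e s where es: "z = Fract e s" "s \<notin> P"
    using z(1) by (auto simp: localization_def)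
  have s0: "s \<noteq> 0"
    using es prime_ideal_zero[OF P] by auto
  have e0: "e \<noteq> 0"
    using es z(2) Fract_eq_0_iff[OF s0] by blast
  have "u (Fract e 1) = u z" if "u \<in> V" "center u = P" for u
    using that es valuation_Fract[OF discrete[OF that(1)] e0 s0]
      valuation_eq_0_outside_center[OF that(1) s0] by simp
  then show ?thesis
    using that e0 by blast
qed

text \<open>If \<open>f\<close> had poles at valuations of \<open>V\<close> centred at \<open>P\<close>, then \<open>z = c\<^sup>\<beta> f\<^sup>\<gamma>\<close>, with
  \<open>c \<in> P\<close> and \<open>\<beta>/\<gamma>\<close> the largest ratio \<open>-u f / u c\<close> over these poles \<open>u\<close>, lies in
  \<open>R\<^sub>P\<close>; its numerator is in \<open>P = center v\<close> but not in the centre of the maximizing \<open>u\<close>.\<close>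
lemma no_pole_centered_in_height_one:
  assumes P: "height_one_prime P" and v: "v \<in> V" "center v = P"
    and fv: "f \<in> valuation_ring v"
  shows "\<forall>u\<in>V. center u \<subseteq> P \<longrightarrow> f \<in> valuation_ring u"
proof (rule ccontr)
  have Pp: "r_prime_ideal P"
    using P by (rule height_one_prime_imp_prime)
  assume "\<not> (\<forall>u\<in>V. center u \<subseteq> P \<longrightarrow> f \<in> valuation_ring u)"
  then have f0: "f \<noteq> 0"
    by (auto simp: valuation_ring_def)
  define S where "S = {u\<in>V. center u \<subseteq> P \<and> f \<notin> valuation_ring u}"
  have "S \<noteq> {}"
    using \<open>\<not> (\<forall>u\<in>V. _)\<close> by (auto simp: S_def)
  have S: "u \<in> V" "center u = P" "u f < 0" if "u \<in> S" for u
    using that center_eq_if_height_one[OF P] f0 by (auto simp: S_def valuation_ring_def)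
  obtain c where c: "c \<in> P" "c \<noteq> 0"
    using height_one_prime_nonzero[OF P] by blast
  have uc: "0 < u (Fract c 1)" if "u \<in> S" for u
    using S[OF that] c by (auto simp: center_def)
  have "S \<subseteq> poles f"
    by (auto simp: S_def poles_def)
  then have "finite S"
    using finite_subset finite_poles by blast
  then obtain m where m: "m \<in> S" "\<forall>u\<in>S. (- u f) * m (Fract c 1) \<le> (- m f) * u (Fract c 1)"
    using finite_ex_max_ratio[OF _ \<open>S \<noteq> {}\<close>, of "\<lambda>u. u (Fract c 1)" "\<lambda>u. - u f"] uc by auto
  define \<beta> where "\<beta> = nat (- m f)"
  define \<gamma> where "\<gamma> = nat (m (Fract c 1))"
  define z where "z = Fract c 1 ^ \<beta> * f ^ \<gamma>"
  have z0: "z \<noteq> 0"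
    using c f0 by (simp add: z_def)
  have vz: "u z = int \<beta> * u (Fract c 1) + int \<gamma> * u f" if "u \<in> V" for u
    using valuation_power_mult[OF discrete[OF that]] c f0 by (simp add: z_def)
  have "z \<in> localization P"
  proof (rule in_localization_if_nonneg_below[OF Pp], intro ballI impI)
    fix u assume u: "u \<in> V" "center u \<subseteq> P"
    show "z \<in> valuation_ring u"
    proof (cases "u \<in> S")
      case True
      then show ?thesis
        using m(2) vz[OF u(1)] S[OF m(1)] uc[OF m(1)]
        by (auto simp: valuation_ring_def \<beta>_def \<gamma>_def algebra_simps)
    next
      case False
      then show ?thesis
        using u vz[OF u(1)] valuation_nonneg[OF u(1) c(2)] f0
        by (auto simp: S_def valuation_ring_def)
    qed
  qed
  then obtain e where e: "e \<noteq> 0" "\<And>u. u \<in> V \<Longrightarrow> center u = P \<Longrightarrow> u (Fract e 1) = u z"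
    using numerator_in_localization[OF Pp _ z0] by blast
  have "0 < int \<beta> * v (Fract c 1)"
    using S(3)[OF m(1)] c v(2) by (auto simp: \<beta>_def center_def mult_neg_pos)
  moreover have "0 \<le> int \<gamma> * v f"
    using fv f0 by (simp add: valuation_ring_def)
  ultimately have "0 < v (Fract e 1)"
    using e(2)[OF v] vz[OF v(1)] by simp
  then have "e \<in> center v"
    by (simp add: center_def)
  then have "e \<in> center m"
    using v(2) S(2)[OF m(1)] by simp
  moreover have "m (Fract e 1) = 0"
    using e(2)[OF S(1,2)[OF m(1)]] vz[OF S(1)[OF m(1)]] S(3)[OF m(1)] uc[OF m(1)]
    by (simp add: \<beta>_def \<gamma>_def)
  ultimately show False
    using e(1) by (simp add: center_def)
qed

lemma valuation_ring_eq_localization: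
  assumes P: "height_one_prime P" and v: "v \<in> V" "center v = P"
  shows "valuation_ring v = localization P"
proof
  have Pp: "r_prime_ideal P"
    using P by (rule height_one_prime_imp_prime)
  show "localization P \<subseteq> valuation_ring v"
    using localization_subset_valuation_ring[OF Pp v] .
  show "valuation_ring v \<subseteq> localization P"
    using in_localization_if_nonneg_below[OF Pp] no_pole_centered_in_height_one[OF P v] by blast
qed

lemma val_at_spec:
  fixes P :: "'a set"
  assumes "height_one_prime P"
  shows "discrete_valuation (val_at P)" "valuation_ring (val_at P) = localization P"
proof -
  obtain v where v: "v \<in> V" "center v \<subseteq> P"
    using exists_center_below assms unfolding height_one_prime_def by blast
  then have "discrete_valuation v \<and> valuation_ring v = localization P"
    using discrete valuation_ring_eq_localization center_eq_if_height_one assms by blast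
  then have "discrete_valuation (val_at P) \<and> valuation_ring (val_at P) = localization P"
    unfolding val_at_def
    by (rule someI[where P = "\<lambda>v. discrete_valuation v \<and> valuation_ring v = localization P"])
  then show "discrete_valuation (val_at P)" "valuation_ring (val_at P) = localization P"
    by blast+
qed

lemma exists_smaller_center:
  assumes w: "w \<in> V" "\<not> height_one_prime (center w)"
  obtains u where "u \<in> V" "center u \<subseteq> center w" "valuation_ring u \<noteq> valuation_ring w"
proof -
  obtain Q where Q: "r_prime_ideal Q" "Q \<subseteq> center w" "Q \<noteq> {0}" "Q \<noteq> center w"
    using w center_prime[OF w(1)] center_nonzero[OF w(1)] unfolding height_one_prime_def by blast
  obtain u where u: "u \<in> V" "center u \<subseteq> Q"
    using exists_center_below[OF Q(1,3)] by blast
  have "valuation_ring u \<noteq> valuation_ring w"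
  proof
    assume "valuation_ring u = valuation_ring w"
    then have "center u = center w"
      using center_eq_non_units[OF discrete[OF u(1)]] center_eq_non_units[OF discrete[OF w(1)]]
      by simp
    then show False
      using u(2) Q(2,4) by blast
  qed
  then show ?thesis
    using that u Q(2) by blast
qed

text \<open>An element \<open>c\<close> of the centre of \<open>u\<close> balances a pole \<open>x\<close> of \<open>w\<close> in \<open>z = c\<^sup>\<beta> x\<^sup>\<gamma>\<close>;
  then \<open>z \<in> R\<close> with \<open>w z = 0\<close> but \<open>u z > 0\<close>, contradicting \<open>center u \<subseteq> center w\<close>.\<close>
lemma in_valuation_ring_if_not_height_one:
  assumes w: "w \<in> V" "\<not> height_one_prime (center w)"
    and x: "\<forall>u\<in>V. valuation_ring u \<noteq> valuation_ring w \<longrightarrow> x \<in> valuation_ring u"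
  shows "x \<in> valuation_ring w"
proof (rule ccontr)
  assume xw: "x \<notin> valuation_ring w"
  then have x0: "x \<noteq> 0" and wx: "w x < 0"
    by (auto simp: valuation_ring_def)
  obtain u where u: "u \<in> V" "center u \<subseteq> center w" "valuation_ring u \<noteq> valuation_ring w"
    using exists_smaller_center[OF w] .
  obtain c where c: "c \<noteq> 0" "c \<in> center u"
    using center_nonzero[OF u(1)] by blast
  have ux: "0 \<le> u x"
    using x u x0 by (auto simp: valuation_ring_def)
  have uc: "0 < u (Fract c 1)" and wc: "0 < w (Fract c 1)"
    using c u(2) by (auto simp: center_def)
  define \<beta> where "\<beta> = nat (- w x)"
  define \<gamma> where "\<gamma> = nat (w (Fract c 1))"
  define z where "z = Fract c 1 ^ \<beta> * x ^ \<gamma>"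
  have z0: "z \<noteq> 0"
    using c x0 by (simp add: z_def)
  have vz: "v z = int \<beta> * v (Fract c 1) + int \<gamma> * v x" if "v \<in> V" for v
    using valuation_power_mult[OF discrete[OF that]] c x0 by (simp add: z_def)
  have wz: "w z = 0"
    using vz[OF w(1)] wx wc by (simp add: \<beta>_def \<gamma>_def)
  have "\<forall>v\<in>V. z \<in> valuation_ring v"
  proof
    fix v assume v: "v \<in> V"
    show "z \<in> valuation_ring v"
    proof (cases "valuation_ring v = valuation_ring w")
      case True
      have "z \<in> valuation_ring w"
        using wz by (simp add: valuation_ring_def)
      then show ?thesis
        using True by simp
    next
      case False
      then show ?thesis
        using x v vz[OF v] valuation_nonneg[OF v c(1)] x0 by (auto simp: valuation_ring_def)
    qed
  qed
  then obtain e where e: "z = Fract e 1"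
    using integral_iff by blast
  have "0 < int \<beta> * u (Fract c 1)"
    using wx uc by (simp add: \<beta>_def mult_neg_pos)
  moreover have "0 \<le> int \<gamma> * u x"
    using ux by simp
  ultimately have "0 < u (Fract e 1)"
    using vz[OF u(1)] e by simp
  then have "e \<in> center u"
    by (simp add: center_def)
  then have "e \<in> center w"
    using u(2) by blast
  moreover have "e \<noteq> 0"
    using e z0 by simp
  moreover have "w (Fract e 1) = 0"
    using wz e by simp
  ultimately show False
    by (simp add: center_def)
qed

lemma krull_family_remove:
  assumes "w \<in> V" "\<not> height_one_prime (center w)"
  shows "krull_family {u\<in>V. valuation_ring u \<noteq> valuation_ring w}"
proof
  fix x :: "'a fract"
  show "(\<exists>a. x = Fract a 1) \<longleftrightarrow> (\<forall>v\<in>{u\<in>V. valuation_ring u \<noteq> valuation_ring w}. x \<in> valuation_ring v)"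
    using integral_iff[of x] in_valuation_ring_if_not_height_one[OF assms, of x] by auto
qed (auto simp: discrete intro: finite_subset[OF _ finite_character])

end

lemma integral_if_nonneg_at_height_one_centers:
  assumes "krull_family V"
    and "\<forall>u\<in>V. height_one_prime (center u) \<longrightarrow> f \<in> valuation_ring u"
  shows "\<exists>a. f = Fract a 1"
  using assms
proof (induction "card (krull_family.poles V f)" arbitrary: V rule: less_induct)
  case less
  interpret krull_family V
    by (rule less.prems(1))
  show ?case
  proof (cases "poles f = {}")
    case True
    then show ?thesis
      using integral_iff[of f] unfolding poles_def by blast
  next
    case False
    then obtain w where w: "w \<in> V" "f \<notin> valuation_ring w"
      by (auto simp: poles_def)
    then have "\<not> height_one_prime (center w)"
      using less.prems(2) by blast
    define V' where "V' = {u\<in>V. valuation_ring u \<noteq> valuation_ring w}"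
    interpret V': krull_family V'
      unfolding V'_def by (rule krull_family_remove) fact+
    have "V'.poles f \<subseteq> poles f - {w}"
    proof
      fix u assume "u \<in> V'.poles f"
      then have "u \<in> V'" "f \<notin> valuation_ring u"
        by (simp_all add: V'.poles_def)
      then show "u \<in> poles f - {w}"
        by (auto simp: V'_def poles_def)
    qed
    then have "V'.poles f \<subset> poles f"
      using w by (auto simp: poles_def)
    then have fewer: "card (V'.poles f) < card (poles f)"
      using finite_poles psubset_card_mono by blast
    have "\<forall>u\<in>V'. height_one_prime (center u) \<longrightarrow> f \<in> valuation_ring u"
      using less.prems(2) by (simp add: V'_def)
    then show ?thesis
      by (rule less.hyps[OF fewer V'.krull_family_axioms])
  qed
qed

section \<open>Divisors of elements\<close>

context krull_family
begin

lemma integral_if_val_at_nonneg: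
  fixes f :: "'a fract"
  assumes "\<forall>P. height_one_prime P \<longrightarrow> 0 \<le> val_at P f"
  shows "\<exists>a. f = Fract a 1"
proof -
  have "f \<in> valuation_ring u" if u: "u \<in> V" "height_one_prime (center u)" for u
  proof -
    have "valuation_ring u = valuation_ring (val_at (center u))"
      using valuation_ring_eq_localization[OF u(2,1) refl] val_at_spec(2)[OF u(2)] by simp
    then show ?thesis
      using assms u(2) by (simp add: valuation_ring_def)
  qed
  then show ?thesis
    using integral_if_nonneg_at_height_one_centers krull_family_axioms by blast
qed

context
  fixes P :: "'a set"
  assumes P: "height_one_prime P"
begin

lemma val_at_nonneg:
  assumes "a \<noteq> 0"
  shows "0 \<le> val_at P (Fract a 1)"
proof -
  have "Fract a 1 \<in> localization P"
    by (rule Fract1_in_localization[OF height_one_prime_imp_prime[OF P]])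
  then have "Fract a 1 \<in> valuation_ring (val_at P)"
    by (simp only: val_at_spec(2)[OF P])
  then show ?thesis
    using assms by (simp add: valuation_ring_def)
qed

lemma val_at_pos_iff:
  assumes a: "a \<noteq> 0"
  shows "0 < val_at P (Fract a 1) \<longleftrightarrow> a \<in> P"
proof -
  have Pp: "r_prime_ideal P"
    using P by (rule height_one_prime_imp_prime)
  have "inverse (Fract a 1) \<noteq> 0"
    using a by (simp del: inverse_fract)
  then have "inverse (Fract a 1) \<in> valuation_ring (val_at P) \<longleftrightarrow>
      0 \<le> val_at P (inverse (Fract a 1))"
    unfolding valuation_ring_def by blast
  then have "inverse (Fract a 1) \<in> localization P \<longleftrightarrow> val_at P (Fract a 1) \<le> 0"
    using val_at_spec(2)[OF P] valuation_inverse[OF val_at_spec(1)[OF P], of "Fract a 1"] a by simp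
  moreover have "inverse (Fract a 1) \<in> localization P \<longleftrightarrow> a \<notin> P"
  proof
    assume "inverse (Fract a 1) \<in> localization P"
    then obtain c d where cd: "Fract 1 a = Fract c d" "d \<notin> P"
      using a by (auto simp: localization_def)
    then have "d = c * a"
      using a prime_ideal_zero[OF Pp] eq_fract(1)[OF a, of d 1 c] by auto
    then show "a \<notin> P"
      using cd(2) prime_ideal_mult_left[OF Pp] by blast
  next
    assume "a \<notin> P"
    then show "inverse (Fract a 1) \<in> localization P"
      using a by (auto simp: localization_def)
  qed
  ultimately show ?thesis
    by linarith
qed

lemma val_at_eq_0_iff: "a \<noteq> 0 \<Longrightarrow> val_at P (Fract a 1) = 0 \<longleftrightarrow> a \<notin> P"
  using val_at_nonneg val_at_pos_iff by force

lemma val_at_mult: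
  "a \<noteq> 0 \<Longrightarrow> b \<noteq> 0 \<Longrightarrow> val_at P (Fract (a * b) 1) = val_at P (Fract a 1) + val_at P (Fract b 1)"
  using valuation_mult[OF val_at_spec(1)[OF P], of "Fract a 1" "Fract b 1"] by simp

end

definition supp :: "'a \<Rightarrow> 'a set set" where
  "supp a = {P. height_one_prime P \<and> a \<in> P}"

lemma finite_supp:
  fixes a :: 'a
  assumes a: "a \<noteq> 0"
  shows "finite (supp a)"
proof -
  have "supp a \<subseteq> center ` {v\<in>V. v (Fract a 1) \<noteq> 0}"
  proof
    fix P assume "P \<in> supp a"
    then have P: "height_one_prime P" and aP: "a \<in> P"
      by (auto simp: supp_def)
    then obtain v where v: "v \<in> V" "center v \<subseteq> P"
      using exists_center_below[OF height_one_prime_imp_prime[OF P]]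
      unfolding height_one_prime_def by blast
    then have "center v = P"
      using center_eq_if_height_one[OF P] by blast
    then show "P \<in> center ` {v\<in>V. v (Fract a 1) \<noteq> 0}"
      using v(1) aP a by (auto simp: center_def)
  qed
  then show ?thesis
    using finite_subset finite_character[OF a] by blast
qed

lemma supp_dvd: "(a::'a) dvd b \<Longrightarrow> supp a \<subseteq> supp b"
  using prime_ideal_dvd[OF height_one_prime_imp_prime] by (auto simp: supp_def)

lemma obtain_element_with_divisor:
  fixes h :: "'a fract"
  assumes "h \<noteq> 0" "\<forall>Q. height_one_prime Q \<longrightarrow> 0 \<le> val_at Q h"
  obtains y where "y \<noteq> 0" "h = Fract y 1" "supp y = {Q. height_one_prime Q \<and> 0 < val_at Q h}"
proof -
  obtain y where y: "h = Fract y 1"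
    using integral_if_val_at_nonneg assms(2) by blast
  moreover have "y \<noteq> 0"
    using assms(1) y by simp
  ultimately show ?thesis
    using that val_at_pos_iff by (auto simp: supp_def)
qed

lemma dvd_if_val_at_le:
  fixes a b :: 'a
  assumes a: "a \<noteq> 0" and b: "b \<noteq> 0"
    and le: "\<forall>P. height_one_prime P \<longrightarrow> val_at P (Fract a 1) \<le> val_at P (Fract b 1)"
  shows "a dvd b"
proof -
  have "0 \<le> val_at P (Fract b a)" if "height_one_prime P" for P :: "'a set"
    using valuation_Fract[OF val_at_spec(1)[OF that] b a] le that by simp
  then obtain c where "Fract b a = Fract c 1"
    using integral_if_val_at_nonneg by blast
  then have "b = c * a"
    using eq_fract(1)[OF a, of 1 b c] by simp
  then show ?thesis
    by simp
qed

lemma unit_if_val_at_eq_0: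
  fixes a :: 'a
  assumes "a \<noteq> 0" "\<forall>P. height_one_prime P \<longrightarrow> val_at P (Fract a 1) = 0"
  shows "a dvd 1"
proof -
  have "\<forall>P. height_one_prime P \<longrightarrow> val_at P (Fract a 1) \<le> val_at P (Fract 1 1)"
    using assms(2) valuation_one[OF val_at_spec(1)] by (auto simp: One_fract_def)
  then show ?thesis
    using dvd_if_val_at_le[OF assms(1) one_neq_zero] by blast
qed

lemma associated_if_val_at_eq:
  fixes a b :: 'a
  assumes "a \<noteq> 0" "b \<noteq> 0"
    and "\<forall>P. height_one_prime P \<longrightarrow> val_at P (Fract a 1) = val_at P (Fract b 1)"
  shows "\<exists>u. u dvd 1 \<and> a = u * b"
proof -
  have "a dvd b" "b dvd a"
    using assms(3) by (auto intro!: dvd_if_val_at_le assms(1,2))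
  then show ?thesis
    using associated_if_dvd_dvd assms(2) by blast
qed

lemma supp_power:
  assumes "n \<noteq> 0"
  shows "supp (a ^ n) = supp a"
proof
  show "supp (a ^ n) \<subseteq> supp a"
    using prime_ideal_power[OF height_one_prime_imp_prime] by (auto simp: supp_def)
  show "supp a \<subseteq> supp (a ^ n)"
    using assms by (intro supp_dvd) (simp add: dvd_power)
qed

lemma supp_one: "supp 1 = {}"
  using prime_ideal_one[OF height_one_prime_imp_prime] by (auto simp: supp_def)

definition degree :: "'a \<Rightarrow> int" where
  "degree a = (\<Sum>Q\<in>supp a. val_at Q (Fract a 1))"

lemma degree_eq_sum:
  fixes a :: 'a
  assumes "a \<noteq> 0" "finite T" "supp a \<subseteq> T" "\<forall>Q\<in>T. height_one_prime Q"
  shows "degree a = (\<Sum>Q\<in>T. val_at Q (Fract a 1))"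
  unfolding degree_def
  by (rule sum.mono_neutral_left) (use assms val_at_eq_0_iff in \<open>auto simp: supp_def\<close>)

lemma degree_nonneg: "(a::'a) \<noteq> 0 \<Longrightarrow> 0 \<le> degree a"
  unfolding degree_def by (rule sum_nonneg) (simp add: supp_def val_at_nonneg)

lemma degree_pos:
  fixes a :: 'a
  assumes "height_one_prime P" "a \<in> P" "a \<noteq> 0"
  shows "0 < degree a"
  unfolding degree_def
proof (rule sum_pos2[of _ P])
  show "finite (supp a)"
    using finite_supp[OF assms(3)] .
qed (use assms in \<open>auto simp: supp_def val_at_nonneg val_at_pos_iff\<close>)

lemma degree_mult:
  fixes a b :: 'a
  assumes "a \<noteq> 0" "b \<noteq> 0"
  shows "degree (a * b) = degree a + degree b"
proof -
  let ?T = "supp (a * b)"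
  have T: "finite ?T" "\<forall>Q\<in>?T. height_one_prime Q"
    using finite_supp assms by (auto simp: supp_def)
  have "degree (a * b) = (\<Sum>Q\<in>?T. val_at Q (Fract a 1) + val_at Q (Fract b 1))"
    unfolding degree_def using assms by (intro sum.cong) (auto simp: supp_def val_at_mult)
  also have "\<dots> = degree a + degree b"
    using degree_eq_sum[OF _ T(1) supp_dvd T(2)] assms by (simp add: sum.distrib)
  finally show ?thesis .
qed

lemma degree_prod_list: "0 \<notin> set xs \<Longrightarrow> degree (prod_list xs) = sum_list (map degree xs)"
proof (induction xs)
  case Nil
  then show ?case
    by (simp add: degree_def supp_one)
next
  case (Cons a xs)
  then show ?case
    using degree_mult[of a "prod_list xs"] by (simp add: prod_list_zero_iff)
qed

lemma val_at_power_int_mult: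
  fixes P :: "'a set"
  assumes "height_one_prime P" "f \<noteq> 0" "g \<noteq> 0"
  shows "val_at P (f powi m * g powi n) = m * val_at P f + n * val_at P g"
  using valuation_power_int_mult[OF val_at_spec(1)[OF assms(1)] assms(2,3)] .

lemma principal_divisor_zero: "principal_divisor (\<lambda>P::'a set. 0)"
  unfolding principal_divisor_def
  by (rule exI[of _ 1]) (auto simp: valuation_one[OF val_at_spec(1)])

lemma principal_divisor_lincomb:
  fixes D1 D2 :: "'a set \<Rightarrow> int"
  assumes "principal_divisor D1" "principal_divisor D2"
  shows "principal_divisor (\<lambda>P. m * D1 P + n * D2 P)"
proof -
  obtain f where f: "f \<noteq> 0" "\<forall>P. height_one_prime P \<longrightarrow> D1 P = val_at P f"
    using assms(1) unfolding principal_divisor_def by blast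
  obtain g where g: "g \<noteq> 0" "\<forall>P. height_one_prime P \<longrightarrow> D2 P = val_at P g"
    using assms(2) unfolding principal_divisor_def by blast
  have "f powi m * g powi n \<noteq> 0"
    using f g by simp
  moreover have "\<forall>P. height_one_prime P \<longrightarrow> m * D1 P + n * D2 P = val_at P (f powi m * g powi n)"
    using f g val_at_power_int_mult by simp
  ultimately show ?thesis
    unfolding principal_divisor_def by blast
qed

lemma torsion_if_supported_on_torsion_primes:
  fixes D :: "'a set \<Rightarrow> int"
  assumes torsion: "\<forall>P\<in>S. \<not> prime_class_infinite_order P"
    and "finite S" "\<forall>P. D P \<noteq> 0 \<longrightarrow> P \<in> S"
  shows "\<exists>n::int. n \<ge> 1 \<and> principal_divisor (\<lambda>P. n * D P)"
  using assms(2,3,1)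
proof (induction S arbitrary: D rule: finite_induct)
  case empty
  then have "(\<lambda>P. 1 * D P) = (\<lambda>P. 0)"
    by auto
  then show ?case
    using principal_divisor_zero by (metis order_refl)
next
  case (insert Q S)
  define D' where "D' = (\<lambda>P. if P = Q then 0 else D P)"
  have "\<forall>P. D' P \<noteq> 0 \<longrightarrow> P \<in> S"
    using insert.prems(1) by (auto simp: D'_def)
  then obtain n where n: "n \<ge> 1" "principal_divisor (\<lambda>P. n * D' P)"
    using insert.IH insert.prems(2) by blast
  obtain m where m: "m \<ge> 1" "principal_divisor (\<lambda>P. if P = Q then m else 0)"
    using insert.prems(2) unfolding prime_class_infinite_order_def by auto
  have "principal_divisor (\<lambda>P. m * (n * D' P) + (n * D Q) * (if P = Q then m else 0))"
    by (rule principal_divisor_lincomb[OF n(2) m(2)])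
  moreover have "(\<lambda>P. m * (n * D' P) + (n * D Q) * (if P = Q then m else 0)) = (\<lambda>P. (n * m) * D P)"
    by (auto simp: D'_def)
  moreover have "1 \<le> n * m"
    using mult_mono[OF n(1) m(1)] n(1) by simp
  ultimately show ?case
    by auto
qed

lemma exists_prime_class_infinite_order:
  assumes "\<not> class_group_torsion TYPE('a)"
  obtains P :: "'a set" where "height_one_prime P" "prime_class_infinite_order P"
proof -
  obtain D :: "'a set \<Rightarrow> int" where D: "is_divisor D"
    "\<forall>n::int. n \<ge> 1 \<longrightarrow> \<not> principal_divisor (\<lambda>P. n * D P)"
    using assms unfolding class_group_torsion_def by blast
  then have "\<not> (\<forall>P\<in>{P. D P \<noteq> 0}. \<not> prime_class_infinite_order P)"
    using torsion_if_supported_on_torsion_primes[of "{P. D P \<noteq> 0}" D]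
    by (auto simp: is_divisor_def)
  then show ?thesis
    using that D(1) by (auto simp: is_divisor_def)
qed

end

section \<open>Elements of minimal divisor\<close>

locale minimal_element = krull_family V for V :: "('a::idom fract \<Rightarrow> int) set" +
  fixes P :: "'a set" and x :: 'a
  assumes height_one: "height_one_prime P"
    and in_P: "x \<in> P"
    and nonzero: "x \<noteq> 0"
    and minimal: "\<And>y. y \<in> P \<Longrightarrow> y \<noteq> 0 \<Longrightarrow> supp y \<subseteq> supp x \<Longrightarrow>
      supp y = supp x \<and> degree x \<le> degree y"
begin

lemma val_at_x_pos: "Q \<in> supp x \<Longrightarrow> 0 < val_at Q (Fract x 1)"
  using val_at_pos_iff nonzero by (simp add: supp_def)

lemma P_in_supp: "P \<in> supp x"
  using height_one in_P by (simp add: supp_def)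

text \<open>If \<open>j\<close> had a smaller ratio \<open>val_at j g / val_at j x\<close> than \<open>P\<close>, then
  \<open>g\<^bsup>val_at j x\<^esup> x\<^bsup>-val_at j g\<^esup>\<close> would be an element of \<open>P\<close> with support inside \<open>supp x - {j}\<close>.\<close>
lemma val_at_ratio_P_le_min:
  fixes g :: "'a fract"
  assumes g0: "g \<noteq> 0"
    and outside: "\<And>Q. height_one_prime Q \<Longrightarrow> Q \<notin> supp x \<Longrightarrow> val_at Q g = 0"
    and j: "j \<in> supp x"
    and min: "\<forall>R\<in>supp x. val_at j g * val_at R (Fract x 1) \<le> val_at R g * val_at j (Fract x 1)"
  shows "val_at P g * val_at j (Fract x 1) \<le> val_at j g * val_at P (Fract x 1)"
proof (rule ccontr)
  assume less: "\<not> ?thesis"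
  define D where "D R = val_at R g" for R
  define X where "X R = val_at R (Fract x 1)" for R
  have Xout: "X R = 0" if "height_one_prime R" "R \<notin> supp x" for R
    using that val_at_eq_0_iff[OF that(1) nonzero] by (simp add: X_def supp_def)
  have x0: "Fract x 1 \<noteq> 0"
    using nonzero by simp
  define h where "h = g powi X j * Fract x 1 powi (- D j)"
  have h0: "h \<noteq> 0"
    using g0 x0 by (simp add: h_def)
  have vh: "val_at R h = X j * D R - D j * X R" if "height_one_prime R" for R
    using val_at_power_int_mult[OF that g0 x0] by (simp add: h_def D_def X_def)
  have "0 \<le> val_at R h" if R: "height_one_prime R" for R
  proof (cases "R \<in> supp x")
    case True
    then show ?thesis
      using min vh[OF R] by (simp add: D_def X_def mult.commute)
  next
    case False
    then show ?thesis
      using vh[OF R] outside[OF R] Xout[OF R] by (simp add: D_def)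
  qed
  then obtain y where y: "y \<noteq> 0" "h = Fract y 1"
    and supp_y: "supp y = {R. height_one_prime R \<and> 0 < val_at R h}"
    using obtain_element_with_divisor[OF h0] by blast
  have "0 < val_at P h"
    using vh[OF height_one] less by (simp add: D_def X_def algebra_simps)
  then have "P \<in> supp y"
    using supp_y height_one by simp
  then have "y \<in> P"
    by (simp add: supp_def)
  moreover have "supp y \<subseteq> supp x - {j}"
  proof
    fix R assume "R \<in> supp y"
    then have R: "height_one_prime R" "0 < val_at R h"
      using supp_y by auto
    have "R \<in> supp x"
    proof (rule ccontr)
      assume "R \<notin> supp x"
      then show False
        using vh[OF R(1)] outside[OF R(1)] Xout[OF R(1)] R(2) by (simp add: D_def)
    qed
    moreover have "R \<noteq> j"
      using vh[OF R(1)] R(2) by (auto simp: mult.commute)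
    ultimately show "R \<in> supp x - {j}"
      by blast
  qed
  ultimately show False
    using minimal[OF _ y(1)] j by blast
qed

lemma val_at_ratio_le:
  fixes g :: "'a fract"
  assumes g0: "g \<noteq> 0"
    and outside: "\<And>Q. height_one_prime Q \<Longrightarrow> Q \<notin> supp x \<Longrightarrow> val_at Q g = 0"
    and Q: "Q \<in> supp x"
  shows "val_at P g * val_at Q (Fract x 1) \<le> val_at Q g * val_at P (Fract x 1)"
proof -
  define D where "D R = val_at R g" for R
  define X where "X R = val_at R (Fract x 1)" for R
  have X: "0 < X R" if "R \<in> supp x" for R
    using that val_at_x_pos by (simp add: X_def)
  obtain j where j: "j \<in> supp x" "\<forall>R\<in>supp x. D j * X R \<le> D R * X j"
    using finite_ex_max_ratio[OF finite_supp[OF nonzero], of X "\<lambda>R. - D R"] X P_in_supp by auto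
  then have "D P * X j * X Q \<le> D j * X P * X Q"
    using val_at_ratio_P_le_min[OF g0 outside] X[OF Q] by (intro mult_right_mono) (auto simp: D_def X_def)
  moreover have "D j * X Q * X P \<le> D Q * X j * X P"
    using j(2) Q X[OF P_in_supp] by (intro mult_right_mono) auto
  ultimately have "(D P * X Q) * X j \<le> (D Q * X P) * X j"
    by (simp add: ac_simps)
  then show ?thesis
    using X[OF j(1)] by (simp add: D_def X_def)
qed

lemma val_at_proportional:
  fixes g :: "'a fract"
  assumes "g \<noteq> 0"
    and "\<And>Q. height_one_prime Q \<Longrightarrow> Q \<notin> supp x \<Longrightarrow> val_at Q g = 0"
    and "Q \<in> supp x"
  shows "val_at Q g * val_at P (Fract x 1) = val_at P g * val_at Q (Fract x 1)"
proof -
  have inv: "val_at R (inverse g) = - val_at R g" if "height_one_prime R" for R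
    using valuation_inverse[OF val_at_spec(1)[OF that] assms(1)] .
  have "Q \<in> supp x" "height_one_prime Q"
    using assms(3) by (auto simp: supp_def)
  then have "val_at P (inverse g) * val_at Q (Fract x 1) \<le> val_at Q (inverse g) * val_at P (Fract x 1)"
    using assms(1,2) inv by (intro val_at_ratio_le) auto
  then have "val_at Q g * val_at P (Fract x 1) \<le> val_at P g * val_at Q (Fract x 1)"
    using inv[OF height_one] inv[OF \<open>height_one_prime Q\<close>] by simp
  then show ?thesis
    using val_at_ratio_le[OF assms] by simp
qed

lemma val_at_eq_0_outside_supp:
  fixes a :: 'a
  assumes "a \<noteq> 0" "supp a \<subseteq> supp x" "height_one_prime Q" "Q \<notin> supp x"
  shows "val_at Q (Fract a 1) = 0"
  using assms val_at_eq_0_iff by (auto simp: supp_def)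

lemma degree_le_if_not_unit:
  fixes a :: 'a
  assumes a: "a \<noteq> 0" "supp a \<subseteq> supp x" "\<not> a dvd 1"
  shows "degree x \<le> degree a"
proof -
  have ratio: "val_at Q (Fract a 1) * val_at P (Fract x 1) = val_at P (Fract a 1) * val_at Q (Fract x 1)"
    if "Q \<in> supp x" for Q
    using val_at_proportional[of "Fract a 1"] val_at_eq_0_outside_supp a that by simp
  have "val_at P (Fract a 1) \<noteq> 0"
  proof
    assume "val_at P (Fract a 1) = 0"
    then have "val_at Q (Fract a 1) = 0" if "height_one_prime Q" for Q
      using ratio val_at_x_pos[OF P_in_supp] val_at_eq_0_outside_supp[OF a(1,2) that] by fastforce
    then show False
      using unit_if_val_at_eq_0 a by blast
  qed
  then have "a \<in> P"
    using val_at_nonneg[OF height_one a(1)] val_at_pos_iff[OF height_one a(1)] by simp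
  then show ?thesis
    using minimal a by blast
qed

lemma associated_if_degree_eq:
  fixes a :: 'a
  assumes a: "a \<noteq> 0" "supp a \<subseteq> supp x" and deg: "degree a = degree x"
  shows "\<exists>u. u dvd 1 \<and> a = u * x"
proof -
  define A where "A Q = val_at Q (Fract a 1)" for Q
  define X where "X Q = val_at Q (Fract x 1)" for Q
  have ratio: "A Q * X P = A P * X Q" if "Q \<in> supp x" for Q
    using val_at_proportional[of "Fract a 1"] val_at_eq_0_outside_supp a that
    by (simp add: A_def X_def)
  have "degree a * X P = (\<Sum>Q\<in>supp x. A Q * X P)"
    using degree_eq_sum[OF a(1) finite_supp[OF nonzero] a(2)]
    by (simp add: A_def sum_distrib_right supp_def)
  also have "\<dots> = A P * degree x"
    using ratio by (simp add: degree_def X_def sum_distrib_left)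
  finally have "A P = X P"
    using deg degree_pos[OF height_one in_P nonzero] by simp
  then have "A Q = X Q" if "height_one_prime Q" for Q
    using ratio val_at_x_pos[OF P_in_supp] val_at_eq_0_outside_supp[OF a that]
      val_at_eq_0_outside_supp[OF nonzero order_refl that]
    by (cases "Q \<in> supp x") (auto simp: X_def A_def)
  then show ?thesis
    using associated_if_val_at_eq[OF a(1) nonzero] by (simp add: A_def X_def)
qed

lemma not_unit: "\<not> x dvd 1"
  using unit_notin_prime_ideal[OF height_one_prime_imp_prime[OF height_one]] in_P by blast

lemma irreducible: "irreducible x"
  unfolding irreducible_def
proof (intro conjI allI impI nonzero not_unit)
  fix a b assume ab: "x = a * b"
  then have "a \<noteq> 0" "b \<noteq> 0"
    using nonzero by auto
  moreover have "supp a \<subseteq> supp x" "supp b \<subseteq> supp x"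
    using ab supp_dvd[of a x] supp_dvd[of b x] by auto
  moreover have "degree x = degree a + degree b"
    using ab degree_mult calculation(1,2) by simp
  ultimately show "a dvd 1 \<or> b dvd 1"
    using degree_le_if_not_unit[of a] degree_le_if_not_unit[of b]
      degree_pos[OF height_one in_P nonzero] by linarith
qed

lemma irreducible_dvd_square:
  fixes a :: 'a
  assumes "irreducible a" "a dvd x ^ 2"
  shows "degree x \<le> degree a" "degree a = degree x \<Longrightarrow> \<exists>u. u dvd 1 \<and> a = u * x"
proof -
  have "a \<noteq> 0" "\<not> a dvd 1"
    using assms(1) by (auto simp: irreducible_def)
  moreover have "supp a \<subseteq> supp x"
    using supp_dvd[OF assms(2)] supp_power[of 2 x] by simp
  ultimately show "degree x \<le> degree a" "degree a = degree x \<Longrightarrow> \<exists>u. u dvd 1 \<and> a = u * x"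
    using degree_le_if_not_unit associated_if_degree_eq by blast+
qed

lemma factor_of_square:
  assumes "\<forall>a\<in>set xs. irreducible a" "prod_list xs = x ^ 2" "a \<in> set xs"
  shows "degree x \<le> degree a" "degree a = degree x \<Longrightarrow> \<exists>u. u dvd 1 \<and> a = u * x"
  using irreducible_dvd_square[of a] assms prod_list_dvd[OF assms(3)] by auto

lemma degree_factorization_of_square:
  assumes irr: "\<forall>a\<in>set xs. irreducible a" and prod: "prod_list xs = x ^ 2"
  shows "sum_list (map degree xs) = 2 * degree x"
proof -
  have "0 \<notin> set xs"
    using irr by (auto simp: irreducible_def)
  then have "sum_list (map degree xs) = degree (prod_list xs)"
    by (simp add: degree_prod_list)
  also have "\<dots> = 2 * degree x"
    using prod degree_mult[OF nonzero nonzero] by (simp add: power2_eq_square)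
  finally show ?thesis .
qed

text \<open>Every factor has degree at least \<open>degree x > 0\<close>, and the degrees add up to \<open>2 * degree x\<close>.\<close>
lemma length_factorization_of_square:
  assumes irr: "\<forall>a\<in>set xs. irreducible a" and prod: "prod_list xs = x ^ 2"
  shows "length xs = 2"
proof -
  have "int (length xs) * degree x \<le> sum_list (map degree xs)"
    using sum_list_mono[of xs "\<lambda>_. degree x" degree] factor_of_square(1)[OF irr prod]
    by (simp add: sum_list_triv)
  then have "length xs \<le> 2"
    using degree_factorization_of_square[OF irr prod] degree_pos[OF height_one in_P nonzero]
    by (simp add: mult_le_cancel_right)
  moreover have "xs \<noteq> []"
  proof
    assume "xs = []"
    then have "1 = x * x"
      using prod by (simp add: power2_eq_square)
    then show False
      using not_unit by (metis dvdI)
  qed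
  moreover have "length xs \<noteq> 1"
  proof
    assume "length xs = 1"
    then obtain a where "xs = [a]"
      by (auto simp: length_Suc_conv)
    then have "irreducible (x * x)"
      using irr prod by (simp add: power2_eq_square)
    then show False
      using not_unit by (auto simp: irreducible_def)
  qed
  ultimately show ?thesis
    by (cases "length xs") auto
qed

lemma factorization_of_square:
  assumes irr: "\<forall>a\<in>set xs. irreducible a" and prod: "prod_list xs = x ^ 2"
  shows "\<exists>u v. u dvd 1 \<and> v dvd 1 \<and> xs = [u * x, v * x]"
proof -
  obtain a b where ab: "xs = [a, b]"
    using length_factorization_of_square[OF irr prod] by (auto simp: numeral_2_eq_2 length_Suc_conv)
  have "degree x \<le> degree a" "degree x \<le> degree b" "degree a + degree b = 2 * degree x"
    using factor_of_square(1)[OF irr prod] degree_factorization_of_square[OF irr prod] ab by simp_all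
  then have "degree a = degree x" "degree b = degree x"
    by linarith+
  then obtain u v where "u dvd 1" "a = u * x" "v dvd 1" "b = v * x"
    using factor_of_square(2)[OF irr prod] ab by (metis list.set_intros)
  then show ?thesis
    using ab by blast
qed

lemma square_factors_uniquely: "factors_uniquely (x ^ 2)"
  unfolding factors_uniquely_def
proof (intro conjI allI impI)
  show "x ^ 2 \<noteq> 0"
    using nonzero by simp
  show "\<not> x ^ 2 dvd 1"
    using not_unit by (metis dvd_trans dvd_triv_left power2_eq_square)
  fix xs ys :: "'a list"
  assume "\<forall>a\<in>set xs. irreducible a" "\<forall>b\<in>set ys. irreducible b"
    "prod_list xs = x ^ 2" "prod_list ys = x ^ 2"
  then obtain u1 u2 w1 w2 where u: "u1 dvd 1" "u2 dvd 1" "w1 dvd 1" "w2 dvd 1"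
    and lists: "xs = [u1 * x, u2 * x]" "ys = [w1 * x, w2 * x]"
    using factorization_of_square by meson
  obtain v1 v2 where "v1 dvd 1" "u1 * x = v1 * (w1 * x)" "v2 dvd 1" "u2 * x = v2 * (w2 * x)"
    using unit_multiples_associated u by meson
  then have "list_all2 (\<lambda>a b. \<exists>u. u dvd 1 \<and> a = u * b) xs ys"
    using lists by auto
  then show "\<exists>zs. mset zs = mset ys \<and> list_all2 (\<lambda>a b. \<exists>u. u dvd 1 \<and> a = u * b) xs zs"
    by blast
qed

end

context krull_family
begin

lemma exists_minimal_element:
  assumes P: "height_one_prime P"
  obtains x where "minimal_element V P x"
proof -
  obtain c where c: "c \<in> P - {0}"
    using height_one_prime_nonzero[OF P] by blast
  obtain x where x: "x \<in> P - {0}"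
    and card: "\<And>y. y \<in> P - {0} \<Longrightarrow> card (supp x) \<le> card (supp y)"
    and deg: "\<And>y. y \<in> P - {0} \<Longrightarrow> card (supp y) = card (supp x) \<Longrightarrow> nat (degree x) \<le> nat (degree y)"
    using obtain_lex_min[OF c, of "\<lambda>y. card (supp y)" "\<lambda>y. nat (degree y)"] by blast
  have "supp y = supp x \<and> degree x \<le> degree y"
    if "y \<in> P" "y \<noteq> 0" "supp y \<subseteq> supp x" for y
  proof -
    have "supp y = supp x"
      using card_subset_eq[OF finite_supp that(3)] card[of y] card_mono[OF finite_supp that(3)] x that
      by fastforce
    then show ?thesis
      using deg[of y] degree_nonneg x that by fastforce
  qed
  then have "minimal_element V P x"
    using x P by unfold_locales auto
  then show ?thesis
    using that by blast
qed

end

theorem mainTheorem4: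
  assumes "krull_domain TYPE('a::idom)"
    and "\<not> class_group_torsion TYPE('a)"
  shows "\<exists>P :: 'a set. height_one_prime P \<and> prime_class_infinite_order P \<and>
           (\<exists>x\<in>P. irreducible x \<and> factors_uniquely (x ^ 2))"
proof -
  obtain V :: "('a fract \<Rightarrow> int) set" where V: "\<forall>v\<in>V. discrete_valuation v"
    "\<forall>x. (\<exists>a. x = Fract a 1) \<longleftrightarrow> (\<forall>v\<in>V. x \<in> valuation_ring v)"
    "\<forall>a. a \<noteq> 0 \<longrightarrow> finite {v\<in>V. v (Fract a 1) \<noteq> 0}"
    using assms(1) unfolding krull_domain_def by blast
  interpret krull_family V
    using V by unfold_locales blast+
  obtain P :: "'a set" where P: "height_one_prime P" "prime_class_infinite_order P"
    using exists_prime_class_infinite_order[OF assms(2)] by blast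
  obtain x where "minimal_element V P x"
    using exists_minimal_element[OF P(1)] by blast
  then interpret minimal_element V P x .
  show ?thesis
    using P in_P irreducible square_factors_uniquely by blast
qed

end
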